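(* Let $H_1$ and $H_2$ be any two finite simple graphs and let $H_1\sqcup H_2$ denote their disjoint union. Then $\bar C_{H_1\sqcup H_2}=\max(\bar C_{H_1},\bar C_{H_2})$.
   Context: For a graph $G$, $\mathrm{Ind}(G)$ is its independence complex (including the empty face) and $\tilde b(G)=\sum_{i\ge-1}\dim_{\mathbb{K}}\widetilde H_i(\mathrm{Ind}(G);\mathbb{K})$ for a fixed field $\mathbb{K}$. $\bar b_H(n)$ is the maximum of $\tilde b(G)$ over all graphs $G$ on at most $n$ vertices with no induced copy of $H$, and $\bar C_H=\limsup_{n\to\infty}\sqrt[n]{\bar b_H(n)}$. *)

theory Defs
  imports Complex_Main "HOL-Library.Liminf_Limsup" "HOL-Library.Extended_Real" "HOL-Library.Function_Algebras"
begin

type_synonym 'v graph = "'v set \<times> ('v \<Rightarrow> 'v \<Rightarrow> bool)"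

definition simple_graph :: "'v graph \<Rightarrow> bool" where
  "simple_graph G \<longleftrightarrow> finite (fst G) \<and>
     (\<forall>x y. snd G x y \<longrightarrow> x \<in> fst G \<and> y \<in> fst G \<and> x \<noteq> y \<and> snd G y x)"

definition has_induced_copy :: "'w graph \<Rightarrow> 'v graph \<Rightarrow> bool" where
  "has_induced_copy H G \<longleftrightarrow> (\<exists>f. inj_on f (fst H) \<and> f ` fst H \<subseteq> fst G \<and>
     (\<forall>x\<in>fst H. \<forall>y\<in>fst H. snd G (f x) (f y) \<longleftrightarrow> snd H x y))"

definition disj_union :: "'a graph \<Rightarrow> 'b graph \<Rightarrow> ('a + 'b) graph" where
  "disj_union H1 H2 = (Inl ` fst H1 \<union> Inr ` fst H2,
     (\<lambda>u v. case (u, v) of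
        (Inl x, Inl y) \<Rightarrow> snd H1 x y
      | (Inr x, Inr y) \<Rightarrow> snd H2 x y
      | _ \<Rightarrow> False))"

(* faces of the independence complex Ind(G), including the empty face *)
definition ind_faces :: "nat graph \<Rightarrow> nat set set" where
  "ind_faces G = {\<sigma>. \<sigma> \<subseteq> fst G \<and> (\<forall>x\<in>\<sigma>. \<forall>y\<in>\<sigma>. \<not> snd G x y)}"

(* simplicial chains supported on faces with k elements (dimension k-1), coefficients in 'k *)
definition chains :: "'k::field itself \<Rightarrow> nat graph \<Rightarrow> nat \<Rightarrow> (nat set \<Rightarrow> 'k) set" where
  "chains _ G k = {c. \<forall>\<sigma>. c \<sigma> \<noteq> 0 \<longrightarrow> \<sigma> \<in> ind_faces G \<and> card \<sigma> = k}"

(* augmented simplicial boundary map from k-element faces to (k-1)-element faces,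
   vertices oriented by the natural order on nat; boundary of 0-element (empty) face is 0 *)
definition bd :: "nat graph \<Rightarrow> nat \<Rightarrow> (nat set \<Rightarrow> 'k::field) \<Rightarrow> (nat set \<Rightarrow> 'k)" where
  "bd G k c = (\<lambda>\<tau>. if k = 0 then 0
      else if \<tau> \<in> ind_faces G \<and> card \<tau> = k - 1
      then (\<Sum>v\<in>fst G - \<tau>. (-1) ^ card {u\<in>\<tau>. u < v} * c (insert v \<tau>))
      else 0)"

definition fscale :: "'k::field \<Rightarrow> (nat set \<Rightarrow> 'k) \<Rightarrow> (nat set \<Rightarrow> 'k)" where
  "fscale r f = (\<lambda>x. r * f x)"

definition kdim :: "(nat set \<Rightarrow> 'k::field) set \<Rightarrow> nat" where
  "kdim S = vector_space.dim fscale S"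

(* dim of reduced homology H_{k-1}(Ind G; 'k) = dim ker bd_k - dim im bd_{k+1} *)
definition red_betti :: "'k::field itself \<Rightarrow> nat graph \<Rightarrow> nat \<Rightarrow> nat" where
  "red_betti K G k =
     kdim {c \<in> chains K G k. bd G k c = (\<lambda>_. 0)} - kdim (bd G (Suc k) ` chains K G (Suc k))"

(* total reduced Betti number, summing H_i for i = -1 .. |V|-1 *)
definition btilde :: "'k::field itself \<Rightarrow> nat graph \<Rightarrow> nat" where
  "btilde K G = (\<Sum>k\<in>{0..card (fst G)}. red_betti K G k)"

(* max of btilde over H-free graphs on at most n vertices (w.l.o.g. vertex set within {0..<n}) *)
definition bbar :: "'k::field itself \<Rightarrow> 'w graph \<Rightarrow> nat \<Rightarrow> nat" where
  "bbar K H n = Sup {btilde K G | G. simple_graph G \<and> fst G \<subseteq> {..<n} \<and> \<not> has_induced_copy H G}"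

definition Cbar :: "'k::field itself \<Rightarrow> 'w graph \<Rightarrow> ereal" where
  "Cbar K H = limsup (\<lambda>n. ereal (root n (real (bbar K H n))))"

end

theory Submission
  imports Defs
begin

text \<open>
  For a vertex \<open>v\<close>, the
  chains on faces avoiding \<open>v\<close> form the subcomplex \<open>Ind(G - v)\<close>, and the quotient is the cone
  over \<open>Ind(G - N[v])\<close> shifted up by one degree; the long exact sequence of this pair gives
  \<open>btilde G \<le> btilde (G - v) + btilde (G - N[v])\<close>.

  Let \<open>G\<close> be \<open>H\<^sub>1 \<squnion> H\<^sub>2\<close>-free on \<open>n\<close> vertices. If \<open>G\<close> has no induced \<open>H\<^sub>1\<close>, then
  \<open>btilde G \<le> bbar H\<^sub>1 n\<close>. Otherwise let \<open>T\<close> be the closed neighbourhood of an induced copy of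
  \<open>H\<^sub>1\<close>; then \<open>G - X\<close> is \<open>H\<^sub>2\<close>-free whenever \<open>T \<subseteq> X\<close>. If \<open>|T| \<le> |H\<^sub>1| d\<close>, branching with
  the inequality above on the vertices of \<open>T\<close> gives \<open>btilde G \<le> 2^(|H\<^sub>1| d) bbar H\<^sub>2 n\<close>;
  otherwise some vertex of the copy has a closed neighbourhood of more than \<open>d\<close> vertices, and
  branching on it removes one vertex in one branch and more than \<open>d\<close> in the other. So if
  \<open>c \<le> c^d (c - 1)\<close>, induction on \<open>n\<close> gives
  \<open>btilde G \<le> 2^(|H\<^sub>1| d) max (bbar H\<^sub>1 n) (bbar H\<^sub>2 n) c^n\<close>. Taking \<open>n\<close>-th roots,
  \<open>Cbar (H\<^sub>1 \<squnion> H\<^sub>2) \<le> c\<^sup>2 max (Cbar H\<^sub>1) (Cbar H\<^sub>2)\<close> for every \<open>c > 1\<close>. Conversely, every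
  \<open>H\<^sub>i\<close>-free graph is \<open>H\<^sub>1 \<squnion> H\<^sub>2\<close>-free.
\<close>

section \<open>Dimension counting in vector spaces\<close>

context vector_space
begin

lemma dim_mono_finite_span:
  assumes "S \<subseteq> T" "T \<subseteq> span W" "finite W"
  shows "dim S \<le> dim T"
proof -
  obtain BS where BS: "BS \<subseteq> S" "independent BS" "S \<subseteq> span BS" "card BS = dim S"
    by (rule basis_exists)
  obtain BT where BT: "BT \<subseteq> T" "independent BT" "T \<subseteq> span BT" "card BT = dim T"
    by (rule basis_exists)
  have "finite BT" using independent_span_bound[OF assms(3) BT(2)] BT(1) assms(2) by blast
  moreover have "BS \<subseteq> span BT" using BS(1) assms(1) BT(3) by blast
  ultimately have "card BS \<le> card BT" using independent_span_bound[OF _ BS(2)] by blast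
  then show ?thesis using BS BT by simp
qed

lemma dim_subset_zero: "S \<subseteq> {0} \<Longrightarrow> dim S = 0"
  using dim_le_card[of S "{}"] by auto

lemma dim_le_dim_kernel_add_dim_image:
  assumes lin: "Vector_Spaces.linear scale scale f" and sub: "subspace S"
    and fin: "S \<subseteq> span W" "finite W"
  shows "dim S \<le> dim {x\<in>S. f x = 0} + dim (f ` S)"
proof -
  interpret L: Vector_Spaces.linear scale scale f by fact
  define K where "K = {x\<in>S. f x = 0}"
  obtain BK where BK: "BK \<subseteq> K" "independent BK" "K \<subseteq> span BK" "card BK = dim K"
    by (rule basis_exists)
  have fin_BK: "finite BK"
    using independent_span_bound[OF fin(2) BK(2)] BK(1) fin(1) K_def by blast
  obtain BF where BF: "BF \<subseteq> f ` S" "independent BF" "f ` S \<subseteq> span BF" "card BF = dim (f ` S)"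
    by (rule basis_exists)
  have "f ` S \<subseteq> span (f ` W)" using fin(1) L.span_image by blast
  then have fin_BF: "finite BF" using independent_span_bound[OF _ BF(2)] BF(1) fin(2) by blast
  have "\<forall>y\<in>BF. \<exists>x. x \<in> S \<and> f x = y" using BF(1) by blast
  then obtain g where g: "\<And>y. y \<in> BF \<Longrightarrow> g y \<in> S \<and> f (g y) = y" by metis
  define P where "P = g ` BF"
  have P_sub: "P \<subseteq> S" and f_P: "f ` P = BF" using g unfolding P_def by force+
  have "S \<subseteq> span (BK \<union> P)"
  proof
    fix x assume x: "x \<in> S"
    have "f x \<in> f ` span P" using x BF(3) f_P L.span_image[of P] by auto
    then obtain y where y: "y \<in> span P" "f y = f x" by auto
    have "y \<in> S" using y(1) span_minimal[OF P_sub sub] by blast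
    then have "x - y \<in> K" using x y K_def L.diff subspace_diff[OF sub] by auto
    then have "x - y \<in> span (BK \<union> P)" using BK(3) span_mono[of BK "BK \<union> P"] by blast
    moreover have "y \<in> span (BK \<union> P)" using y(1) span_mono[of P "BK \<union> P"] by blast
    ultimately have "(x - y) + y \<in> span (BK \<union> P)" by (rule span_add)
    then show "x \<in> span (BK \<union> P)" by simp
  qed
  then have "dim S \<le> card (BK \<union> P)" using dim_le_card fin_BK fin_BF P_def by blast
  also have "\<dots> \<le> card BK + card P" by (rule card_Un_le)
  also have "card P \<le> card BF" unfolding P_def using fin_BF card_image_le by blast
  finally have "dim S \<le> dim K + dim (f ` S)" using BK(4) BF(4) by linarith
  then show ?thesis unfolding K_def .
qed

lemma dim_kernel_add_dim_image_le:
  assumes lin: "Vector_Spaces.linear scale scale f" and fin: "S \<subseteq> span W" "finite W"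
  shows "dim {x\<in>S. f x = 0} + dim (f ` S) \<le> dim S"
proof -
  interpret L: Vector_Spaces.linear scale scale f by fact
  define K where "K = {x\<in>S. f x = 0}"
  obtain BK where BK: "BK \<subseteq> K" "independent BK" "K \<subseteq> span BK" "card BK = dim K"
    by (rule basis_exists)
  obtain B where B: "BK \<subseteq> B" "B \<subseteq> S" "independent B" "S \<subseteq> span B"
    using maximal_independent_subset_extend[of BK S] BK(1,2) K_def by auto
  have fin_B: "finite B" using independent_span_bound[OF fin(2) B(3)] B(2) fin(1) by blast
  have "f ` B \<subseteq> insert 0 (f ` (B - BK))" using BK(1) K_def by auto
  then have "span (f ` B) \<subseteq> span (f ` (B - BK))" by (metis span_insert_0 span_mono)
  moreover have "f ` S \<subseteq> span (f ` B)" using B(4) L.span_image by blast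
  ultimately have "dim (f ` S) \<le> card (f ` (B - BK))"
    using dim_le_card[of "f ` S" "f ` (B - BK)"] fin_B by blast
  also have "\<dots> \<le> card (B - BK)" using fin_B card_image_le by blast
  also have "\<dots> = card B - card BK" using fin_B B(1) by (meson card_Diff_subset finite_subset)
  finally have "dim K + dim (f ` S) \<le> dim S"
    using basis_card_eq_dim[OF B(2,4,3)] BK(4) card_mono[OF fin_B B(1)] by linarith
  then show ?thesis unfolding K_def .
qed

lemma rank_nullity_finite_span:
  assumes "Vector_Spaces.linear scale scale f" "subspace S" "S \<subseteq> span W" "finite W"
  shows "dim S = dim {x\<in>S. f x = 0} + dim (f ` S)"
  using dim_le_dim_kernel_add_dim_image[OF assms] dim_kernel_add_dim_image_le[OF assms(1,3,4)]
  by linarith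

lemma dim_image_eq_finite_span:
  assumes "Vector_Spaces.linear scale scale f" "subspace S" "S \<subseteq> span W" "finite W"
    and "\<And>x. x \<in> S \<Longrightarrow> f x = 0 \<Longrightarrow> x = 0"
  shows "dim (f ` S) = dim S"
  using rank_nullity_finite_span[OF assms(1-4)] dim_subset_zero[of "{x\<in>S. f x = 0}"] assms(5)
  by auto

text \<open>
  The next two lemmas bound the homology of a complex \<open>C' \<rightarrow> C \<rightarrow> _\<close> by the homologies of a
  subcomplex and of the quotient, where the subcomplex is the kernel of an idempotent \<open>p\<close> and the
  quotient is identified with the image of \<open>p\<close>, carrying the differential \<open>p \<circ> d\<close>.
\<close>

lemma dim_cycles_le_split:
  assumes C: "subspace C" "C \<subseteq> span W" "finite W"
    and d: "Vector_Spaces.linear scale scale d" and p: "Vector_Spaces.linear scale scale p"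
    and p_C: "\<And>c. c \<in> C \<Longrightarrow> p c \<in> C" and p_idem: "\<And>c. p (p c) = p c"
    and d_ker: "\<And>a. a \<in> C \<Longrightarrow> p a = 0 \<Longrightarrow> p (d a) = 0"
  shows "dim {c\<in>C. d c = 0} \<le> dim {c\<in>C. p c = 0 \<and> d c = 0} + dim {c\<in>C. p c = c \<and> p (d c) = 0}"
proof -
  interpret D: Vector_Spaces.linear scale scale d by fact
  interpret P: Vector_Spaces.linear scale scale p by fact
  define Z where "Z = {c\<in>C. d c = 0}"
  have "Z = C \<inter> {x. d x = 0}" unfolding Z_def by auto
  then have "subspace Z" using subspace_inter[OF C(1) D.subspace_kernel] by simp
  then have "dim Z = dim {x\<in>Z. p x = 0} + dim (p ` Z)"
    using rank_nullity_finite_span[OF p _ _ C(3)] C(2) Z_def by blast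
  moreover have "{x\<in>Z. p x = 0} = {c\<in>C. p c = 0 \<and> d c = 0}" unfolding Z_def by auto
  moreover have "p ` Z \<subseteq> {c\<in>C. p c = c \<and> p (d c) = 0}"
  proof
    fix y assume "y \<in> p ` Z"
    then obtain z where z: "z \<in> C" "d z = 0" "y = p z" unfolding Z_def by blast
    have "z - p z \<in> C" using subspace_diff[OF C(1) z(1) p_C[OF z(1)]] .
    moreover have "p (z - p z) = 0" using P.diff p_idem by simp
    ultimately have "p (d (z - p z)) = 0" by (rule d_ker)
    then have "p (d (p z)) = 0" using D.diff P.diff P.neg z(2) by simp
    then show "y \<in> {c\<in>C. p c = c \<and> p (d c) = 0}" using z p_C p_idem by auto
  qed
  then have "dim (p ` Z) \<le> dim {c\<in>C. p c = c \<and> p (d c) = 0}"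
    by (rule dim_mono_finite_span[OF _ _ C(3)]) (use C(2) in auto)
  ultimately show ?thesis unfolding Z_def[symmetric] by simp
qed

lemma dim_boundaries_split_le:
  assumes C: "subspace C" "C \<subseteq> span W" "finite W"
    and d: "Vector_Spaces.linear scale scale d" and p: "Vector_Spaces.linear scale scale p"
    and p_C: "\<And>c. c \<in> C \<Longrightarrow> p c \<in> C" and p_idem: "\<And>c. p (p c) = p c"
    and d_ker: "\<And>a. a \<in> C \<Longrightarrow> p a = 0 \<Longrightarrow> p (d a) = 0"
  shows "dim (d ` {c\<in>C. p c = 0}) + dim ((\<lambda>c. p (d c)) ` {c\<in>C. p c = c}) \<le> dim (d ` C)"
proof -
  interpret D: Vector_Spaces.linear scale scale d by fact
  interpret P: Vector_Spaces.linear scale scale p by fact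
  have B_span: "d ` C \<subseteq> span (d ` W)" using C(2) D.span_image by blast
  have "dim (d ` C) = dim {x \<in> d ` C. p x = 0} + dim (p ` d ` C)"
    using rank_nullity_finite_span[OF p D.subspace_image[OF C(1)] B_span] C(3) by simp
  moreover have "dim (d ` {c\<in>C. p c = 0}) \<le> dim {x \<in> d ` C. p x = 0}"
    by (rule dim_mono_finite_span[OF _ _ finite_imageI[OF C(3)]]) (use B_span d_ker in auto)
  moreover have "p ` d ` C = (\<lambda>c. p (d c)) ` {c\<in>C. p c = c}"
  proof
    show "p ` d ` C \<subseteq> (\<lambda>c. p (d c)) ` {c\<in>C. p c = c}"
    proof
      fix y assume "y \<in> p ` d ` C"
      then obtain c where c: "c \<in> C" "y = p (d c)" by blast
      have "c - p c \<in> C" using subspace_diff[OF C(1) c(1) p_C[OF c(1)]] .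
      moreover have "p (c - p c) = 0" using P.diff p_idem by simp
      ultimately have "p (d (c - p c)) = 0" by (rule d_ker)
      then have "p (d c) = p (d (p c))" using D.diff P.diff by simp
      then show "y \<in> (\<lambda>c. p (d c)) ` {c\<in>C. p c = c}" using c p_C p_idem by auto
    qed
  qed auto
  ultimately show ?thesis by simp
qed

end

section \<open>Chains of the independence complex\<close>

lemma fscale_vector_space: "vector_space (fscale :: 'k::field \<Rightarrow> (nat set \<Rightarrow> 'k) \<Rightarrow> _)"
  by unfold_locales (auto simp: fscale_def fun_eq_iff algebra_simps)

interpretation chain_space: vector_space "fscale :: 'k::field \<Rightarrow> (nat set \<Rightarrow> 'k) \<Rightarrow> _"
  by (rule fscale_vector_space)

definition cycles :: "'k::field itself \<Rightarrow> nat graph \<Rightarrow> nat \<Rightarrow> (nat set \<Rightarrow> 'k) set" where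
  "cycles K G k = {c \<in> chains K G k. bd G k c = 0}"

definition boundaries :: "'k::field itself \<Rightarrow> nat graph \<Rightarrow> nat \<Rightarrow> (nat set \<Rightarrow> 'k) set" where
  "boundaries K G k = bd G (Suc k) ` chains K G (Suc k)"

lemma red_betti_eq_dim_cycles_boundaries:
  "red_betti K G k = chain_space.dim (cycles K G k) - chain_space.dim (boundaries K G k)"
  by (simp add: red_betti_def kdim_def cycles_def boundaries_def zero_fun_def)

definition del_vertices :: "nat graph \<Rightarrow> nat set \<Rightarrow> nat graph" where
  "del_vertices G X = (fst G - X, \<lambda>x y. snd G x y \<and> x \<notin> X \<and> y \<notin> X)"

definition closed_nbhd :: "nat graph \<Rightarrow> nat \<Rightarrow> nat set" where
  "closed_nbhd G v = insert v {u. snd G v u}"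

definition unit_chain :: "nat set \<Rightarrow> (nat set \<Rightarrow> 'k::field)" where
  "unit_chain \<sigma> = (\<lambda>\<tau>. if \<tau> = \<sigma> then 1 else 0)"

text \<open>\<open>star_part v\<close> is the idempotent whose kernel is the subcomplex \<open>Ind(G - v)\<close>.\<close>

definition star_part :: "nat \<Rightarrow> (nat set \<Rightarrow> 'k::field) \<Rightarrow> (nat set \<Rightarrow> 'k)" where
  "star_part v c = (\<lambda>\<sigma>. if v \<in> \<sigma> then c \<sigma> else 0)"

text \<open>\<open>vertex_sign v \<rho>\<close> is the coefficient of \<open>\<rho>\<close> in the boundary \<open>bd\<close> of the face \<open>insert v \<rho>\<close>.\<close>

definition vertex_sign :: "nat \<Rightarrow> nat set \<Rightarrow> 'k::field" where
  "vertex_sign v \<rho> = (-1) ^ card {u\<in>\<rho>. u < v}"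

definition cone :: "nat \<Rightarrow> (nat set \<Rightarrow> 'k::field) \<Rightarrow> (nat set \<Rightarrow> 'k)" where
  "cone v c = (\<lambda>\<sigma>. if v \<in> \<sigma> then vertex_sign v (\<sigma> - {v}) * c (\<sigma> - {v}) else 0)"

lemma fst_del_vertices [simp]: "fst (del_vertices G X) = fst G - X"
  by (simp add: del_vertices_def)

lemma snd_del_vertices [simp]: "snd (del_vertices G X) x y \<longleftrightarrow> snd G x y \<and> x \<notin> X \<and> y \<notin> X"
  by (simp add: del_vertices_def)

lemma del_vertices_del_vertices: "del_vertices (del_vertices G X) Y = del_vertices G (X \<union> Y)"
  by (auto simp: del_vertices_def)

lemma del_vertices_empty: "del_vertices G {} = G"
  by (simp add: del_vertices_def)

lemma del_vertices_insert_outside: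
  assumes "simple_graph G" "u \<notin> fst G"
  shows "del_vertices G (insert u X) = del_vertices G X"
  using assms unfolding del_vertices_def simple_graph_def by (auto simp: fun_eq_iff)

lemma simple_graph_del_vertices: "simple_graph G \<Longrightarrow> simple_graph (del_vertices G X)"
  unfolding simple_graph_def by auto

lemma closed_nbhd_subset: "simple_graph G \<Longrightarrow> s \<in> fst G \<Longrightarrow> closed_nbhd G s \<subseteq> fst G"
  unfolding closed_nbhd_def simple_graph_def by auto

lemma ind_faces_del_vertices:
  "\<sigma> \<in> ind_faces (del_vertices G X) \<longleftrightarrow> \<sigma> \<in> ind_faces G \<and> \<sigma> \<inter> X = {}"
  unfolding ind_faces_def by auto

lemma ind_faces_del_closed_nbhd:
  "\<rho> \<in> ind_faces (del_vertices G (closed_nbhd G v)) \<longleftrightarrow>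
     \<rho> \<in> ind_faces G \<and> v \<notin> \<rho> \<and> (\<forall>u\<in>\<rho>. \<not> snd G v u)"
  by (auto simp: ind_faces_del_vertices closed_nbhd_def)

lemma finite_ind_face: "simple_graph G \<Longrightarrow> \<sigma> \<in> ind_faces G \<Longrightarrow> finite \<sigma>"
  unfolding simple_graph_def ind_faces_def by (auto intro: finite_subset)

lemma insert_ind_face:
  assumes G: "simple_graph G" and v: "v \<in> fst G"
    and \<rho>: "\<rho> \<in> ind_faces G" "\<forall>u\<in>\<rho>. \<not> snd G v u"
  shows "insert v \<rho> \<in> ind_faces G"
  using assms unfolding ind_faces_def simple_graph_def by blast

lemma ind_face_remove:
  "\<tau> \<in> ind_faces G \<Longrightarrow> v \<in> \<tau> \<Longrightarrow> \<tau> - {v} \<in> ind_faces (del_vertices G (closed_nbhd G v))"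
  unfolding ind_faces_del_closed_nbhd unfolding ind_faces_def by auto

lemma ind_faces_del_closed_nbhd_iff:
  assumes "simple_graph G" "v \<in> fst G" "v \<notin> \<rho>"
  shows "\<rho> \<in> ind_faces (del_vertices G (closed_nbhd G v)) \<longleftrightarrow> insert v \<rho> \<in> ind_faces G"
  using insert_ind_face[OF assms(1,2)] ind_face_remove[of "insert v \<rho>" G v] assms(3)
  unfolding ind_faces_del_closed_nbhd by auto

lemma chains_subspace: "chain_space.subspace (chains K G k)"
  unfolding chain_space.subspace_def chains_def fscale_def
proof (intro conjI ballI allI, goal_cases)
  case (2 x y)
  show ?case
  proof (intro CollectI allI impI)
    fix \<sigma> assume "(x + y) \<sigma> \<noteq> 0"
    then have "x \<sigma> \<noteq> 0 \<or> y \<sigma> \<noteq> 0" by auto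
    then show "\<sigma> \<in> ind_faces G \<and> card \<sigma> = k" using 2 by auto
  qed
qed auto

lemma sum_fun_apply: "finite A \<Longrightarrow> (\<Sum>a\<in>A. f a) x = (\<Sum>a\<in>A. f a x)"
  by (induction rule: finite_induct) auto

lemma chains_subset_span_unit_chains:
  fixes K :: "'k::field itself"
  assumes "finite (fst G)"
  shows "chains K G k \<subseteq> chain_space.span (unit_chain ` Pow (fst G))"
proof
  fix c :: "nat set \<Rightarrow> 'k" assume c: "c \<in> chains K G k"
  have fin: "finite (Pow (fst G))" using assms by simp
  have "c = (\<Sum>\<sigma>\<in>Pow (fst G). fscale (c \<sigma>) (unit_chain \<sigma>))"
  proof
    fix \<tau>
    have "(\<Sum>\<sigma>\<in>Pow (fst G). fscale (c \<sigma>) (unit_chain \<sigma>)) \<tau> = (if \<tau> \<in> Pow (fst G) then c \<tau> else 0)"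
      using fin by (simp add: sum_fun_apply fscale_def unit_chain_def if_distrib cong: if_cong)
    then show "c \<tau> = (\<Sum>\<sigma>\<in>Pow (fst G). fscale (c \<sigma>) (unit_chain \<sigma>)) \<tau>"
      using c by (auto simp: chains_def ind_faces_def)
  qed
  also have "\<dots> \<in> chain_space.span (unit_chain ` Pow (fst G))"
    by (intro chain_space.span_sum chain_space.span_scale chain_space.span_base) auto
  finally show "c \<in> chain_space.span (unit_chain ` Pow (fst G))" .
qed

lemma linear_bd: "Vector_Spaces.linear fscale fscale (bd G k)"
  unfolding Vector_Spaces.linear_iff
  by (auto simp: fscale_vector_space bd_def fun_eq_iff fscale_def sum.distrib sum_distrib_left
      algebra_simps)

lemma linear_star_part: "Vector_Spaces.linear fscale fscale (star_part v)"
  unfolding Vector_Spaces.linear_iff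
  by (auto simp: fscale_vector_space star_part_def fun_eq_iff fscale_def)

lemma linear_cone: "Vector_Spaces.linear fscale fscale (cone v)"
  unfolding Vector_Spaces.linear_iff
  by (auto simp: fscale_vector_space cone_def fun_eq_iff fscale_def algebra_simps)

lemma linear_uminus_cone: "Vector_Spaces.linear fscale fscale (\<lambda>c. - cone v c)"
  using linear_cone[of v] unfolding Vector_Spaces.linear_iff by (auto simp: fscale_def fun_eq_iff)

lemma bd_nonzero_imp: "bd G k c \<tau> \<noteq> 0 \<Longrightarrow> k \<noteq> 0 \<and> \<tau> \<in> ind_faces G \<and> card \<tau> = k - 1"
  by (auto simp: bd_def split: if_splits)

lemma star_part_idem [simp]: "star_part v (star_part v c) = star_part v c"
  by (simp add: star_part_def fun_eq_iff)

lemma star_part_chains: "c \<in> chains K G k \<Longrightarrow> star_part v c \<in> chains K G k"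
  unfolding chains_def star_part_def by auto

lemma chains_del_vertex: "chains K (del_vertices G {v}) k = {c \<in> chains K G k. star_part v c = 0}"
  unfolding chains_def star_part_def by (auto simp: ind_faces_del_vertices fun_eq_iff)

lemma bd_del_vertex:
  assumes G: "simple_graph G" and c: "c \<in> chains K (del_vertices G {v}) k"
  shows "bd G k c = bd (del_vertices G {v}) k c"
proof
  fix \<tau>
  have fin: "finite (fst G)" using G unfolding simple_graph_def by auto
  have c_v: "c \<sigma> = 0" if "v \<in> \<sigma>" for \<sigma> using c that by (auto simp: chains_def ind_faces_del_vertices)
  show "bd G k c \<tau> = bd (del_vertices G {v}) k c \<tau>"
  proof (cases "k \<noteq> 0 \<and> \<tau> \<in> ind_faces G \<and> card \<tau> = k - 1 \<and> v \<notin> \<tau>")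
    case True
    have "(\<Sum>w\<in>fst G - \<tau>. (-1) ^ card {u\<in>\<tau>. u < w} * c (insert w \<tau>)) =
          (\<Sum>w\<in>(fst G - {v}) - \<tau>. (-1) ^ card {u\<in>\<tau>. u < w} * c (insert w \<tau>))"
      by (rule sum.mono_neutral_right) (use fin c_v in auto)
    then show ?thesis using True by (simp add: bd_def ind_faces_del_vertices)
  qed (auto simp: bd_def ind_faces_del_vertices c_v)
qed

lemma bd_del_vertices_avoids: "bd (del_vertices G X) k c \<tau> \<noteq> 0 \<Longrightarrow> \<tau> \<inter> X = {}"
  using bd_nonzero_imp ind_faces_del_vertices by blast

lemma star_part_bd_kernel:
  assumes "simple_graph G" "c \<in> chains K G k" "star_part v c = 0"
  shows "star_part v (bd G k c) = 0"
proof -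
  have "c \<in> chains K (del_vertices G {v}) k" using assms(2,3) by (simp add: chains_del_vertex)
  then have "bd G k c = bd (del_vertices G {v}) k c" by (rule bd_del_vertex[OF assms(1)])
  then show ?thesis using bd_del_vertices_avoids[of G "{v}" k c]
    by (auto simp: star_part_def fun_eq_iff)
qed

lemma vertex_sign_square: "vertex_sign v \<rho> * vertex_sign v \<rho> = (1::'k::field)"
  unfolding vertex_sign_def by (simp add: power_mult_distrib[symmetric])

lemma cone_eq_0_imp:
  assumes "\<And>\<sigma>. x \<sigma> \<noteq> 0 \<Longrightarrow> v \<notin> \<sigma>" and "cone v x = 0"
  shows "x = 0"
proof
  fix \<rho>
  show "x \<rho> = 0 \<rho>"
  proof (cases "v \<in> \<rho>")
    case False
    have "cone v x (insert v \<rho>) = 0" using assms(2) by simp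
    then have "vertex_sign v \<rho> * x \<rho> = 0" using False by (simp add: cone_def)
    moreover have "vertex_sign v \<rho> \<noteq> (0::'a)" by (simp add: vertex_sign_def)
    ultimately show ?thesis by simp
  qed (use assms(1) in auto)
qed

lemma star_chains_eq_cone_image:
  assumes G: "simple_graph G" and v: "v \<in> fst G"
  shows "{b \<in> chains K G (Suc k). star_part v b = b} =
    cone v ` chains K (del_vertices G (closed_nbhd G v)) k"
proof (intro equalityI subsetI)
  fix b assume b: "b \<in> {b \<in> chains K G (Suc k). star_part v b = b}"
  define c where "c = (\<lambda>\<rho>. if v \<notin> \<rho> then vertex_sign v \<rho> * b (insert v \<rho>) else 0)"
  have b_v: "b \<sigma> = 0" if "v \<notin> \<sigma>" for \<sigma> using b that by (metis (mono_tags) mem_Collect_eq star_part_def)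
  have "c \<in> chains K (del_vertices G (closed_nbhd G v)) k"
  proof (unfold chains_def, intro CollectI allI impI)
    fix \<rho> assume "c \<rho> \<noteq> 0"
    then have "v \<notin> \<rho>" "insert v \<rho> \<in> ind_faces G" "card (insert v \<rho>) = Suc k"
      using b by (auto simp: c_def chains_def split: if_splits)
    then show "\<rho> \<in> ind_faces (del_vertices G (closed_nbhd G v)) \<and> card \<rho> = k"
      using ind_faces_del_closed_nbhd_iff[OF G v] finite_ind_face[OF G, of "insert v \<rho>"] by auto
  qed
  moreover have "b = cone v c"
    by (auto simp: fun_eq_iff cone_def c_def insert_absorb mult.assoc[symmetric]
        vertex_sign_square b_v)
  ultimately show "b \<in> cone v ` chains K (del_vertices G (closed_nbhd G v)) k" by blast
next
  fix b assume "b \<in> cone v ` chains K (del_vertices G (closed_nbhd G v)) k"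
  then obtain c where c: "c \<in> chains K (del_vertices G (closed_nbhd G v)) k" "b = cone v c"
    by blast
  have "cone v c \<in> chains K G (Suc k)"
  proof (unfold chains_def, intro CollectI allI impI)
    fix \<sigma> assume "cone v c \<sigma> \<noteq> 0"
    then have "v \<in> \<sigma>" "c (\<sigma> - {v}) \<noteq> 0" by (auto simp: cone_def split: if_splits)
    then have "v \<in> \<sigma>" "\<sigma> - {v} \<in> ind_faces (del_vertices G (closed_nbhd G v))" "card (\<sigma> - {v}) = k"
      using c(1) by (auto simp: chains_def)
    moreover from this have "\<sigma> \<in> ind_faces G"
      using ind_faces_del_closed_nbhd_iff[OF G v, of "\<sigma> - {v}"] by (simp add: insert_absorb)
    ultimately show "\<sigma> \<in> ind_faces G \<and> card \<sigma> = Suc k"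
      using finite_ind_face[OF G] by (metis card_Suc_Diff1)
  qed
  then show "b \<in> {b \<in> chains K G (Suc k). star_part v b = b}"
    unfolding c(2) by (simp add: star_part_def cone_def fun_eq_iff)
qed

lemma card_filter_insert:
  assumes "finite \<rho>" "a \<notin> \<rho>"
  shows "card {u \<in> insert a \<rho>. P u} = card {u\<in>\<rho>. P u} + (if P a then 1 else 0)"
proof -
  have "{u \<in> insert a \<rho>. P u} = (if P a then insert a {u\<in>\<rho>. P u} else {u\<in>\<rho>. P u})" by auto
  then show ?thesis using assms by simp
qed

lemma vertex_sign_swap:
  assumes "finite \<rho>" "v \<notin> \<rho>" "w \<notin> \<rho>" "v \<noteq> w"
  shows "(-1) ^ card {u \<in> insert v \<rho>. u < w} * vertex_sign v (insert w \<rho>) =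
    - (vertex_sign v \<rho> * (-1) ^ card {u\<in>\<rho>. u < w} :: 'k::field)"
  using assms card_filter_insert[OF assms(1,2), of "\<lambda>u. u < w"]
    card_filter_insert[OF assms(1,3), of "\<lambda>u. u < v"]
  unfolding vertex_sign_def by (cases "v < w") (auto simp: power_add algebra_simps)

lemma cone_insert_nbhd_vertex:
  assumes "c \<in> chains K (del_vertices G (closed_nbhd G v)) k" "w \<in> closed_nbhd G v" "w \<noteq> v"
  shows "cone v c (insert w \<tau>) = 0"
proof -
  have "w \<in> insert w \<tau> - {v}" using assms(3) by simp
  then have "insert w \<tau> - {v} \<notin> ind_faces (del_vertices G (closed_nbhd G v))"
    using assms(2) unfolding ind_faces_del_vertices by auto
  then show ?thesis using assms(1) unfolding chains_def cone_def by auto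
qed

lemma bd_cone_at_face:
  fixes G :: "nat graph" and v :: nat and c :: "nat set \<Rightarrow> 'k::field"
  defines "G' \<equiv> del_vertices G (closed_nbhd G v)"
  assumes G: "simple_graph G" and c: "c \<in> chains K G' k"
    and \<tau>: "\<tau> \<in> ind_faces G" "card \<tau> = k" "v \<in> \<tau>"
  shows "bd G (Suc k) (cone v c) \<tau> = - (vertex_sign v (\<tau> - {v}) * bd G' k c (\<tau> - {v}))"
proof -
  define \<rho> where "\<rho> = \<tau> - {v}"
  have \<tau>_eq: "\<tau> = insert v \<rho>" and v_\<rho>: "v \<notin> \<rho>" using \<tau>(3) \<rho>_def by auto
  have fin_G: "finite (fst G)" using G unfolding simple_graph_def by auto
  have fin_\<rho>: "finite \<rho>" using finite_ind_face[OF G \<tau>(1)] \<rho>_def by simp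
  have k: "k \<noteq> 0" using \<tau>(2,3) finite_ind_face[OF G \<tau>(1)] card_gt_0_iff by blast
  have \<rho>_face: "\<rho> \<in> ind_faces G'" unfolding G'_def \<rho>_def by (rule ind_face_remove[OF \<tau>(1,3)])
  have v_N: "v \<in> closed_nbhd G v" by (simp add: closed_nbhd_def)
  have "bd G (Suc k) (cone v c) \<tau> =
      (\<Sum>w\<in>fst G - \<tau>. (-1) ^ card {u\<in>\<tau>. u < w} * cone v c (insert w \<tau>))"
    using \<tau> by (simp add: bd_def)
  also have "\<dots> = (\<Sum>w\<in>fst G' - \<rho>. (-1) ^ card {u\<in>\<tau>. u < w} * cone v c (insert w \<tau>))"
  proof (rule sum.mono_neutral_right)
    show "fst G' - \<rho> \<subseteq> fst G - \<tau>" using v_N \<tau>_eq unfolding G'_def by auto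
    show "\<forall>w\<in>fst G - \<tau> - (fst G' - \<rho>). (-1) ^ card {u\<in>\<tau>. u < w} * cone v c (insert w \<tau>) = 0"
      using cone_insert_nbhd_vertex[OF c[unfolded G'_def]] \<tau>(3) \<tau>_eq unfolding G'_def by auto
  qed (use fin_G in simp)
  also have "\<dots> = (\<Sum>w\<in>fst G' - \<rho>. - (vertex_sign v \<rho> * ((-1) ^ card {u\<in>\<rho>. u < w} * c (insert w \<rho>))))"
  proof (rule sum.cong)
    fix w assume "w \<in> fst G' - \<rho>"
    then have "w \<noteq> v" "w \<notin> \<rho>" using v_N unfolding G'_def by auto
    then have "insert w \<tau> - {v} = insert w \<rho>" using \<tau>_eq v_\<rho> by auto
    then have "(-1) ^ card {u\<in>\<tau>. u < w} * cone v c (insert w \<tau>) =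
        ((-1) ^ card {u \<in> insert v \<rho>. u < w} * vertex_sign v (insert w \<rho>)) * c (insert w \<rho>)"
      using \<tau>_eq by (simp add: cone_def mult.assoc)
    then show "(-1) ^ card {u\<in>\<tau>. u < w} * cone v c (insert w \<tau>) =
        - (vertex_sign v \<rho> * ((-1) ^ card {u\<in>\<rho>. u < w} * c (insert w \<rho>)))"
      unfolding vertex_sign_swap[OF fin_\<rho> v_\<rho> \<open>w \<notin> \<rho>\<close> \<open>w \<noteq> v\<close>[symmetric]]
      by (simp add: algebra_simps)
  qed simp
  also have "\<dots> = - (vertex_sign v \<rho> * bd G' k c \<rho>)"
    using k \<rho>_face \<tau>(2) \<tau>_eq v_\<rho> fin_\<rho>
    by (simp add: bd_def sum_negf sum_distrib_left)
  finally show ?thesis unfolding \<rho>_def .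
qed

lemma star_part_bd_cone:
  fixes G :: "nat graph" and v :: nat and c :: "nat set \<Rightarrow> 'k::field"
  defines "G' \<equiv> del_vertices G (closed_nbhd G v)"
  assumes G: "simple_graph G" and v: "v \<in> fst G" and c: "c \<in> chains K G' k"
  shows "star_part v (bd G (Suc k) (cone v c)) = - cone v (bd G' k c)"
proof
  fix \<tau>
  show "star_part v (bd G (Suc k) (cone v c)) \<tau> = (- cone v (bd G' k c)) \<tau>"
  proof (cases "v \<in> \<tau> \<and> \<tau> \<in> ind_faces G \<and> card \<tau> = k")
    case True
    then show ?thesis
      using bd_cone_at_face[OF G c[unfolded G'_def]] by (simp add: star_part_def cone_def G'_def)
  next
    case False
    have "bd G' k c (\<tau> - {v}) = 0" if "v \<in> \<tau>"
    proof (rule ccontr)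
      assume "bd G' k c (\<tau> - {v}) \<noteq> 0"
      then have "k \<noteq> 0" "\<tau> - {v} \<in> ind_faces G'" "card (\<tau> - {v}) = k - 1"
        using bd_nonzero_imp by blast+
      moreover from this have "\<tau> \<in> ind_faces G"
        using ind_faces_del_closed_nbhd_iff[OF G v, of "\<tau> - {v}"] that
        unfolding G'_def by (simp add: insert_absorb)
      ultimately show False
        using False that finite_ind_face[OF G] by (metis One_nat_def Suc_pred card_Suc_Diff1 not_gr_zero)
    qed
    then show ?thesis using False by (auto simp: star_part_def cone_def bd_def)
  qed
qed

section \<open>Deleting a vertex and its closed neighbourhood\<close>

lemma bd_in_chains: "bd G (Suc k) c \<in> chains K G k"
  by (auto simp: chains_def dest: bd_nonzero_imp)

lemma cycles_subspace: "chain_space.subspace (cycles K G k)"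
proof -
  interpret bd: Vector_Spaces.linear fscale fscale "bd G k" by (rule linear_bd)
  have "cycles K G k = chains K G k \<inter> {c. bd G k c = 0}" by (auto simp: cycles_def)
  then show ?thesis using chain_space.subspace_inter[OF chains_subspace bd.subspace_kernel] by simp
qed

lemma boundaries_subspace: "chain_space.subspace (boundaries K G k)"
proof -
  interpret bd: Vector_Spaces.linear fscale fscale "bd G (Suc k)" by (rule linear_bd)
  show ?thesis unfolding boundaries_def by (rule bd.subspace_image[OF chains_subspace])
qed

lemma cycles_del_vertex:
  assumes "simple_graph G"
  shows "{c \<in> chains K G k. star_part v c = 0 \<and> bd G k c = 0} = cycles K (del_vertices G {v}) k"
proof (intro set_eqI)
  fix c
  have "c \<in> chains K (del_vertices G {v}) k \<longleftrightarrow> c \<in> chains K G k \<and> star_part v c = 0"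
    by (simp add: chains_del_vertex)
  then show "c \<in> {c \<in> chains K G k. star_part v c = 0 \<and> bd G k c = 0} \<longleftrightarrow>
      c \<in> cycles K (del_vertices G {v}) k"
    using bd_del_vertex[OF assms, of c K v k] unfolding cycles_def by auto
qed

lemma boundaries_del_vertex:
  assumes "simple_graph G"
  shows "bd G (Suc k) ` {c \<in> chains K G (Suc k). star_part v c = 0} = boundaries K (del_vertices G {v}) k"
proof -
  have "bd G (Suc k) ` {c \<in> chains K G (Suc k). star_part v c = 0} =
      bd G (Suc k) ` chains K (del_vertices G {v}) (Suc k)"
    by (simp add: chains_del_vertex)
  also have "\<dots> = boundaries K (del_vertices G {v}) k"
    unfolding boundaries_def by (rule image_cong[OF refl bd_del_vertex[OF assms]])
  finally show ?thesis .
qed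

lemma cone_0 [simp]: "cone v 0 = 0"
  by (simp add: cone_def fun_eq_iff)

lemma star_cycles_eq_cone_image:
  fixes G :: "nat graph" and v :: nat
  defines "G' \<equiv> del_vertices G (closed_nbhd G v)"
  assumes G: "simple_graph G" and v: "v \<in> fst G"
  shows "{c \<in> chains K G (Suc k). star_part v c = c \<and> star_part v (bd G (Suc k) c) = 0} =
    cone v ` cycles K G' k"
proof -
  have cone_bd_eq_0: "cone v (bd G' k c) = 0 \<longleftrightarrow> bd G' k c = 0" for c :: "nat set \<Rightarrow> 'a"
  proof
    assume "cone v (bd G' k c) = 0"
    then show "bd G' k c = 0"
      by (rule cone_eq_0_imp[rotated])
        (use bd_del_vertices_avoids[of G "closed_nbhd G v" k c] in \<open>auto simp: G'_def closed_nbhd_def\<close>)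
  qed simp
  have "star_part v (bd G (Suc k) (cone v c)) = 0 \<longleftrightarrow> bd G' k c = 0" if "c \<in> chains K G' k" for c
    using star_part_bd_cone[OF G v that[unfolded G'_def]] cone_bd_eq_0 by (simp add: G'_def)
  then have "{b \<in> cone v ` chains K G' k. star_part v (bd G (Suc k) b) = 0} = cone v ` cycles K G' k"
    unfolding cycles_def by auto
  moreover have "{c \<in> chains K G (Suc k). star_part v c = c \<and> star_part v (bd G (Suc k) c) = 0} =
      {b \<in> {b \<in> chains K G (Suc k). star_part v b = b}. star_part v (bd G (Suc k) b) = 0}"
    by blast
  ultimately show ?thesis unfolding star_chains_eq_cone_image[OF G v] G'_def by simp
qed

lemma star_boundaries_eq_cone_image:
  fixes G :: "nat graph" and v :: nat
  defines "G' \<equiv> del_vertices G (closed_nbhd G v)"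
  assumes G: "simple_graph G" and v: "v \<in> fst G"
  shows "(\<lambda>c. star_part v (bd G (Suc (Suc k)) c)) ` {c \<in> chains K G (Suc (Suc k)). star_part v c = c} =
    (\<lambda>c. - cone v c) ` boundaries K G' k"
  unfolding star_chains_eq_cone_image[OF G v] boundaries_def image_image G'_def
  by (intro image_cong refl star_part_bd_cone[OF G v])

lemma star_homology_eq_red_betti:
  fixes K :: "'k::field itself"
  assumes G: "simple_graph G" and v: "v \<in> fst G"
  shows "chain_space.dim {c \<in> chains K G (Suc k). star_part v c = c \<and> star_part v (bd G (Suc k) c) = 0}
    - chain_space.dim ((\<lambda>c. star_part v (bd G (Suc (Suc k)) c)) `
        {c \<in> chains K G (Suc (Suc k)). star_part v c = c})
    = red_betti K (del_vertices G (closed_nbhd G v)) k"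
proof -
  define G' where "G' = del_vertices G (closed_nbhd G v)"
  define W :: "(nat set \<Rightarrow> 'k) set" where "W = unit_chain ` Pow (fst G')"
  have fin_W: "finite W"
    using simple_graph_del_vertices[OF G] unfolding W_def G'_def simple_graph_def by simp
  have span: "chains K G' j \<subseteq> chain_space.span W" for j
    using chains_subset_span_unit_chains simple_graph_del_vertices[OF G]
    unfolding W_def G'_def simple_graph_def by blast
  have avoids_v: "x \<sigma> = 0" if "x \<in> chains K G' j" "v \<in> \<sigma>" for x :: "nat set \<Rightarrow> 'k" and j \<sigma>
    using that unfolding chains_def G'_def ind_faces_del_vertices closed_nbhd_def by auto
  have "chain_space.dim (cone v ` cycles K G' k) = chain_space.dim (cycles K G' k)"
  proof (rule chain_space.dim_image_eq_finite_span[OF linear_cone cycles_subspace _ fin_W])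
    show "cycles K G' k \<subseteq> chain_space.span W" using span unfolding cycles_def by blast
    show "x = 0" if "x \<in> cycles K G' k" "cone v x = 0" for x
      using that avoids_v cone_eq_0_imp unfolding cycles_def by blast
  qed
  moreover have "chain_space.dim ((\<lambda>c. - cone v c) ` boundaries K G' k) =
      chain_space.dim (boundaries K G' k)"
  proof (rule chain_space.dim_image_eq_finite_span[OF linear_uminus_cone boundaries_subspace _ fin_W])
    show "boundaries K G' k \<subseteq> chain_space.span W"
      using span bd_in_chains unfolding boundaries_def by blast
    show "x = 0" if x: "x \<in> boundaries K G' k" "- cone v x = 0" for x
    proof (rule cone_eq_0_imp)
      have "x \<in> chains K G' k" using x(1) bd_in_chains unfolding boundaries_def by blast
      then show "\<And>\<sigma>. x \<sigma> \<noteq> 0 \<Longrightarrow> v \<notin> \<sigma>" using avoids_v by blast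
      show "cone v x = 0" using x(2) by simp
    qed
  qed
  ultimately show ?thesis
    unfolding star_cycles_eq_cone_image[OF G v] star_boundaries_eq_cone_image[OF G v]
      red_betti_eq_dim_cycles_boundaries G'_def
    by simp
qed

lemma star_cycles_0_trivial:
  assumes "simple_graph G"
  shows "chain_space.dim {c \<in> chains K G 0. star_part v c = c \<and> star_part v (bd G 0 c) = 0} = 0"
proof (rule chain_space.dim_subset_zero, intro subsetI)
  fix c assume c: "c \<in> {c \<in> chains K G 0. star_part v c = c \<and> star_part v (bd G 0 c) = 0}"
  have "c \<sigma> = 0" for \<sigma>
  proof (rule ccontr)
    assume c_\<sigma>: "c \<sigma> \<noteq> 0"
    then have "\<sigma> \<in> ind_faces G" "card \<sigma> = 0" using c by (auto simp: chains_def)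
    then have "\<sigma> = {}" using finite_ind_face[OF assms] by auto
    then have "star_part v c \<sigma> = 0" by (simp add: star_part_def)
    then show False using c c_\<sigma> by simp
  qed
  then show "c \<in> {0}" by (simp add: fun_eq_iff)
qed

lemma red_betti_le_del_vertex:
  fixes K :: "'k::field itself"
  assumes G: "simple_graph G" and v: "v \<in> fst G"
  shows "red_betti K G k \<le> red_betti K (del_vertices G {v}) k +
           (case k of 0 \<Rightarrow> 0 | Suc j \<Rightarrow> red_betti K (del_vertices G (closed_nbhd G v)) j)"
proof -
  define W :: "(nat set \<Rightarrow> 'k) set" where "W = unit_chain ` Pow (fst G)"
  have fin_W: "finite W" using G unfolding W_def simple_graph_def by simp
  have span: "chains K G j \<subseteq> chain_space.span W" for j
    using chains_subset_span_unit_chains G unfolding W_def simple_graph_def by blast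
  note split_rules = chains_subspace span fin_W linear_bd linear_star_part star_part_chains
    star_part_idem star_part_bd_kernel[OF G]
  define Z\<^sub>s\<^sub>t where
    "Z\<^sub>s\<^sub>t = chain_space.dim {c \<in> chains K G k. star_part v c = c \<and> star_part v (bd G k c) = 0}"
  define B\<^sub>s\<^sub>t where "B\<^sub>s\<^sub>t = chain_space.dim
    ((\<lambda>c. star_part v (bd G (Suc k) c)) ` {c \<in> chains K G (Suc k). star_part v c = c})"
  have "chain_space.dim (cycles K G k) \<le>
      chain_space.dim {c \<in> chains K G k. star_part v c = 0 \<and> bd G k c = 0} + Z\<^sub>s\<^sub>t"
    using chain_space.dim_cycles_le_split[OF split_rules] unfolding cycles_def Z\<^sub>s\<^sub>t_def .
  moreover have "chain_space.dim (bd G (Suc k) ` {c \<in> chains K G (Suc k). star_part v c = 0}) + B\<^sub>s\<^sub>t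
      \<le> chain_space.dim (boundaries K G k)"
    using chain_space.dim_boundaries_split_le[OF split_rules] unfolding boundaries_def B\<^sub>s\<^sub>t_def .
  ultimately have "red_betti K G k \<le> red_betti K (del_vertices G {v}) k + (Z\<^sub>s\<^sub>t - B\<^sub>s\<^sub>t)"
    unfolding red_betti_eq_dim_cycles_boundaries cycles_del_vertex[OF G] boundaries_del_vertex[OF G]
    by linarith
  moreover have "Z\<^sub>s\<^sub>t - B\<^sub>s\<^sub>t \<le>
      (case k of 0 \<Rightarrow> 0 | Suc j \<Rightarrow> red_betti K (del_vertices G (closed_nbhd G v)) j)"
  proof (cases k)
    case 0
    then show ?thesis using star_cycles_0_trivial[OF G, of K v] unfolding Z\<^sub>s\<^sub>t_def by simp
  next
    case (Suc j)
    then show ?thesis using star_homology_eq_red_betti[OF G v, of K j] unfolding Z\<^sub>s\<^sub>t_def B\<^sub>s\<^sub>t_def by simp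
  qed
  ultimately show ?thesis by linarith
qed

section \<open>The total Betti number under vertex deletion\<close>

lemma red_betti_eq_0:
  assumes G: "simple_graph G" and k: "card (fst G) < k"
  shows "red_betti K G k = 0"
proof -
  have "c \<sigma> = 0" if "c \<in> chains K G k" for c \<sigma>
  proof (rule ccontr)
    assume "c \<sigma> \<noteq> 0"
    then have "\<sigma> \<subseteq> fst G" "card \<sigma> = k" using that by (auto simp: chains_def ind_faces_def)
    then show False using card_mono[of "fst G" \<sigma>] G k unfolding simple_graph_def by auto
  qed
  then have "cycles K G k \<subseteq> {0}" unfolding cycles_def by (auto simp: fun_eq_iff)
  then show ?thesis unfolding red_betti_eq_dim_cycles_boundaries
    using chain_space.dim_subset_zero[of "cycles K G k"] by simp
qed

lemma btilde_eq_sum_atMost: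
  assumes "simple_graph G" "card (fst G) \<le> n"
  shows "btilde K G = (\<Sum>k\<le>n. red_betti K G k)"
  unfolding btilde_def atLeast0AtMost
proof (rule sum.mono_neutral_left)
  show "\<forall>i\<in>{..n} - {..card (fst G)}. red_betti K G i = 0"
    by (intro ballI red_betti_eq_0[OF assms(1)]) auto
qed (use assms(2) in auto)

lemma btilde_le_del_vertex:
  assumes G: "simple_graph G" and v: "v \<in> fst G"
  shows "btilde K G \<le> btilde K (del_vertices G {v}) + btilde K (del_vertices G (closed_nbhd G v))"
proof -
  have fin: "finite (fst G)" using G unfolding simple_graph_def by auto
  then obtain m where m: "card (fst G) = Suc m" using v by (metis card_Suc_Diff1)
  have card_N: "card (fst G - closed_nbhd G v) \<le> m"
  proof -
    have "card (fst G - closed_nbhd G v) \<le> card (fst G - {v})"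
      using fin by (intro card_mono) (auto simp: closed_nbhd_def)
    then show ?thesis using m v fin by simp
  qed
  have "btilde K G = (\<Sum>k\<le>Suc m. red_betti K G k)"
    using btilde_eq_sum_atMost[OF G, of "Suc m" K] m by (simp del: sum.atMost_Suc)
  also have "\<dots> \<le> (\<Sum>k\<le>Suc m. red_betti K (del_vertices G {v}) k +
      (case k of 0 \<Rightarrow> 0 | Suc j \<Rightarrow> red_betti K (del_vertices G (closed_nbhd G v)) j))"
    by (rule sum_mono) (rule red_betti_le_del_vertex[OF G v])
  also have "\<dots> = (\<Sum>k\<le>Suc m. red_betti K (del_vertices G {v}) k) +
      (\<Sum>j\<le>m. red_betti K (del_vertices G (closed_nbhd G v)) j)"
    by (simp add: sum.distrib sum.atMost_Suc_shift del: sum.atMost_Suc)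
  also have "\<dots> = btilde K (del_vertices G {v}) + btilde K (del_vertices G (closed_nbhd G v))"
    using btilde_eq_sum_atMost[OF simple_graph_del_vertices[OF G], of "{v}" "Suc m" K]
      btilde_eq_sum_atMost[OF simple_graph_del_vertices[OF G], of "closed_nbhd G v" m K] card_N m
      card_Diff1_le[of "fst G" v]
    by (simp del: sum.atMost_Suc)
  finally show ?thesis .
qed

lemma btilde_le_branching:
  assumes "finite T" "simple_graph G"
    and "\<And>X. T \<subseteq> X \<Longrightarrow> btilde K (del_vertices G X) \<le> B"
  shows "btilde K G \<le> 2 ^ card T * B"
  using assms
proof (induction T arbitrary: G rule: finite_induct)
  case empty
  then show ?case using empty(2)[of "{}"] by (simp add: del_vertices_empty)
next
  case (insert u T)
  show ?case
  proof (cases "u \<in> fst G")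
    case True
    have IH: "btilde K (del_vertices G Y) \<le> 2 ^ card T * B" if "u \<in> Y" for Y
    proof (rule insert.IH[OF simple_graph_del_vertices[OF insert.prems(1)]])
      fix X assume "T \<subseteq> X"
      then show "btilde K (del_vertices (del_vertices G Y) X) \<le> B"
        unfolding del_vertices_del_vertices using that by (intro insert.prems(2)) auto
    qed
    have "btilde K G \<le> btilde K (del_vertices G {u}) + btilde K (del_vertices G (closed_nbhd G u))"
      by (rule btilde_le_del_vertex[OF insert.prems(1) True])
    also have "\<dots> \<le> 2 ^ card T * B + 2 ^ card T * B"
      using IH[of "{u}"] IH[of "closed_nbhd G u"] by (simp add: closed_nbhd_def)
    also have "\<dots> = 2 ^ card (insert u T) * B" using insert.hyps by simp
    finally show ?thesis .
  next
    case False
    have "btilde K (del_vertices G X) \<le> B" if "T \<subseteq> X" for X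
      using insert.prems(2)[of "insert u X"] that
        del_vertices_insert_outside[OF insert.prems(1) False] by auto
    then have "btilde K G \<le> 2 ^ card T * B" by (rule insert.IH[OF insert.prems(1)])
    then show ?thesis using insert.hyps by simp
  qed
qed

lemma finite_simple_graphs_below: "finite {G :: nat graph. simple_graph G \<and> fst G \<subseteq> {..<N}}"
proof (rule finite_subset)
  show "{G :: nat graph. simple_graph G \<and> fst G \<subseteq> {..<N}} \<subseteq>
      (\<lambda>(V, R). (V, \<lambda>x y. (x, y) \<in> R)) ` (Pow {..<N} \<times> Pow ({..<N} \<times> {..<N}))"
  proof
    fix G :: "nat graph" assume G: "G \<in> {G. simple_graph G \<and> fst G \<subseteq> {..<N}}"
    then have "{(x, y). snd G x y} \<subseteq> {..<N} \<times> {..<N}" unfolding simple_graph_def by auto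
    then show "G \<in> (\<lambda>(V, R). (V, \<lambda>x y. (x, y) \<in> R)) ` (Pow {..<N} \<times> Pow ({..<N} \<times> {..<N}))"
      using G by (intro image_eqI[of _ _ "(fst G, {(x, y). snd G x y})"]) auto
  qed
qed simp

lemma finite_btilde_free:
  "finite {btilde K G | G. simple_graph G \<and> fst G \<subseteq> {..<n} \<and> \<not> has_induced_copy H G}"
proof (rule finite_subset)
  show "{btilde K G | G. simple_graph G \<and> fst G \<subseteq> {..<n} \<and> \<not> has_induced_copy H G} \<subseteq>
      btilde K ` {G. simple_graph G \<and> fst G \<subseteq> {..<n}}" by blast
qed (rule finite_imageI[OF finite_simple_graphs_below])

lemma btilde_le_bbar:
  assumes "simple_graph G" "fst G \<subseteq> {..<n}" "\<not> has_induced_copy H G"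
  shows "btilde K G \<le> bbar K H n"
  unfolding bbar_def by (rule le_cSup_finite[OF finite_btilde_free]) (use assms in blast)

lemma Sup_finite_nat_mem: "finite (S :: nat set) \<Longrightarrow> Sup S \<in> insert 0 S"
  by (cases "S = {}") (simp_all add: cSup_eq_Max)

lemma real_bbar_le:
  assumes "\<And>G. simple_graph G \<Longrightarrow> fst G \<subseteq> {..<n} \<Longrightarrow> \<not> has_induced_copy H G \<Longrightarrow>
      real (btilde K G) \<le> B"
    and "0 \<le> B"
  shows "real (bbar K H n) \<le> B"
  using Sup_finite_nat_mem[OF finite_btilde_free, of K n H] assms unfolding bbar_def by auto

section \<open>Induced copies\<close>

definition induced_embedding :: "('w \<Rightarrow> 'v) \<Rightarrow> 'w graph \<Rightarrow> 'v graph \<Rightarrow> bool" where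
  "induced_embedding f H G \<longleftrightarrow> inj_on f (fst H) \<and> f ` fst H \<subseteq> fst G \<and>
     (\<forall>x\<in>fst H. \<forall>y\<in>fst H. snd G (f x) (f y) \<longleftrightarrow> snd H x y)"

lemma has_induced_copy_iff: "has_induced_copy H G \<longleftrightarrow> (\<exists>f. induced_embedding f H G)"
  unfolding has_induced_copy_def induced_embedding_def ..

lemma induced_embedding_del_vertices:
  assumes f: "induced_embedding f H (del_vertices G X)"
  shows "induced_embedding f H G"
proof -
  have "f x \<notin> X" if "x \<in> fst H" for x using f that unfolding induced_embedding_def by auto
  then show ?thesis using f unfolding induced_embedding_def by auto
qed

lemma has_induced_copy_del_vertices:
  "has_induced_copy H (del_vertices G X) \<Longrightarrow> has_induced_copy H G"
  unfolding has_induced_copy_iff using induced_embedding_del_vertices by blast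

lemma fst_disj_union: "fst (disj_union H\<^sub>1 H\<^sub>2) = Inl ` fst H\<^sub>1 \<union> Inr ` fst H\<^sub>2"
  by (simp add: disj_union_def)

lemma snd_disj_union [simp]:
  "snd (disj_union H\<^sub>1 H\<^sub>2) (Inl a) (Inl b) = snd H\<^sub>1 a b"
  "snd (disj_union H\<^sub>1 H\<^sub>2) (Inr c) (Inr d) = snd H\<^sub>2 c d"
  "snd (disj_union H\<^sub>1 H\<^sub>2) (Inl a) (Inr d) = False"
  "snd (disj_union H\<^sub>1 H\<^sub>2) (Inr c) (Inl b) = False"
  by (simp_all add: disj_union_def)

lemma induced_embedding_comp:
  assumes f: "induced_embedding f H G" and g: "induced_embedding g H' H"
  shows "induced_embedding (f \<circ> g) H' G"
  unfolding induced_embedding_def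
proof (intro conjI ballI)
  have "g ` fst H' \<subseteq> fst H" using g unfolding induced_embedding_def by blast
  then show "inj_on (f \<circ> g) (fst H')" "(f \<circ> g) ` fst H' \<subseteq> fst G"
    using f g unfolding induced_embedding_def by (auto intro: comp_inj_on inj_on_subset) blast
  fix x y assume xy: "x \<in> fst H'" "y \<in> fst H'"
  then have "g x \<in> fst H" "g y \<in> fst H" using \<open>g ` fst H' \<subseteq> fst H\<close> by auto
  then show "snd G ((f \<circ> g) x) ((f \<circ> g) y) \<longleftrightarrow> snd H' x y"
    using f g xy unfolding induced_embedding_def by simp
qed

lemma induced_embedding_Inl: "induced_embedding Inl H\<^sub>1 (disj_union H\<^sub>1 H\<^sub>2)"
  unfolding induced_embedding_def fst_disj_union by auto

lemma induced_embedding_Inr: "induced_embedding Inr H\<^sub>2 (disj_union H\<^sub>1 H\<^sub>2)"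
  unfolding induced_embedding_def fst_disj_union by auto

lemma has_induced_copy_trans:
  "has_induced_copy H' H \<Longrightarrow> has_induced_copy H G \<Longrightarrow> has_induced_copy H' G"
  unfolding has_induced_copy_iff using induced_embedding_comp by blast

lemma induced_embedding_disj_union:
  assumes G: "simple_graph G"
    and f: "induced_embedding f H\<^sub>1 G" and g: "induced_embedding g H\<^sub>2 (del_vertices G X)"
    and X: "(\<Union>x\<in>fst H\<^sub>1. closed_nbhd G (f x)) \<subseteq> X"
  shows "induced_embedding (case_sum f g) (disj_union H\<^sub>1 H\<^sub>2) G"
proof -
  have g_X: "g y \<notin> X" if "y \<in> fst H\<^sub>2" for y
    using g that unfolding induced_embedding_def by auto
  have far: "f x \<noteq> g y \<and> \<not> snd G (f x) (g y) \<and> \<not> snd G (g y) (f x)"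
    if "x \<in> fst H\<^sub>1" "y \<in> fst H\<^sub>2" for x y
  proof -
    have "g y \<notin> closed_nbhd G (f x)" using g_X[OF that(2)] X that(1) by blast
    moreover have "snd G (g y) (f x) \<Longrightarrow> snd G (f x) (g y)"
      using G unfolding simple_graph_def by blast
    ultimately show ?thesis unfolding closed_nbhd_def by auto
  qed
  have g_G: "induced_embedding g H\<^sub>2 G" by (rule induced_embedding_del_vertices[OF g])
  have f_adj: "snd G (f x) (f x') \<longleftrightarrow> snd H\<^sub>1 x x'" if "x \<in> fst H\<^sub>1" "x' \<in> fst H\<^sub>1" for x x'
    using f that unfolding induced_embedding_def by blast
  have g_adj: "snd G (g y) (g y') \<longleftrightarrow> snd H\<^sub>2 y y'" if "y \<in> fst H\<^sub>2" "y' \<in> fst H\<^sub>2" for y y'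
    using g_G that unfolding induced_embedding_def by blast
  show ?thesis
    unfolding induced_embedding_def fst_disj_union
  proof (intro conjI ballI)
    show "inj_on (case_sum f g) (Inl ` fst H\<^sub>1 \<union> Inr ` fst H\<^sub>2)"
    proof (rule inj_onI, elim UnE imageE)
    qed (use f g_G far far[THEN conjunct1, THEN not_sym] in \<open>auto simp: induced_embedding_def dest: inj_onD\<close>)
    show "case_sum f g ` (Inl ` fst H\<^sub>1 \<union> Inr ` fst H\<^sub>2) \<subseteq> fst G"
      using f g_G unfolding induced_embedding_def by auto
    fix a b assume "a \<in> Inl ` fst H\<^sub>1 \<union> Inr ` fst H\<^sub>2" "b \<in> Inl ` fst H\<^sub>1 \<union> Inr ` fst H\<^sub>2"
    then show "snd G (case_sum f g a) (case_sum f g b) \<longleftrightarrow> snd (disj_union H\<^sub>1 H\<^sub>2) a b"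
      by (elim UnE imageE) (simp_all add: f_adj g_adj far)
  qed
qed

section \<open>An exponential bound for \<open>H\<^sub>1 \<squnion> H\<^sub>2\<close>-free graphs\<close>

lemma power_recurrence_le:
  fixes c :: real
  assumes c: "c \<ge> 1" "c \<le> c ^ d * (c - 1)" and m: "d < m"
  shows "c ^ (m - 1) + c ^ (m - d) \<le> c ^ m"
proof -
  obtain j where j: "m = Suc (d + j)" using m by (metis add_Suc_right less_imp_Suc_add)
  have "c ^ (m - 1) + c ^ (m - d) = c ^ j * (c ^ d + c)"
    unfolding j by (simp add: Suc_diff_le power_add algebra_simps)
  also have "\<dots> \<le> c ^ j * (c ^ d + c ^ d * (c - 1))"
    by (rule mult_left_mono) (use c in auto)
  also have "\<dots> = c ^ m" unfolding j by (simp add: power_add algebra_simps)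
  finally show ?thesis .
qed

lemma card_UN_gt_imp_card_gt:
  assumes "finite S" "card S * d < card (\<Union>s\<in>S. A s)"
  shows "\<exists>s\<in>S. d < card (A s)"
proof (rule ccontr)
  assume "\<not> ?thesis"
  then have "(\<Sum>s\<in>S. card (A s)) \<le> card S * d"
    using sum_bounded_above[of S "\<lambda>s. card (A s)" d] by (simp add: not_less)
  then show False using card_UN_le[OF assms(1), of A] assms(2) by linarith
qed

lemma btilde_le_branch_large_nbhd:
  fixes c A :: real
  assumes G: "simple_graph G" and s: "s \<in> fst G" "d < card (closed_nbhd G s)"
    and c: "c \<ge> 1" "c \<le> c ^ d * (c - 1)" and A: "A \<ge> 0"
    and del_s: "real (btilde K (del_vertices G {s})) \<le> A * c ^ card (fst G - {s})"
    and del_N: "real (btilde K (del_vertices G (closed_nbhd G s))) \<le>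
      A * c ^ card (fst G - closed_nbhd G s)"
  shows "real (btilde K G) \<le> A * c ^ card (fst G)"
proof -
  define m where "m = card (fst G)"
  have fin: "finite (fst G)" using G unfolding simple_graph_def by auto
  have N_G: "closed_nbhd G s \<subseteq> fst G" by (rule closed_nbhd_subset[OF G s(1)])
  have d_m: "d < m" using s(2) card_mono[OF fin N_G] unfolding m_def by simp
  have "c ^ card (fst G - closed_nbhd G s) \<le> c ^ (m - d)"
    using s(2) card_Diff_subset[OF finite_subset[OF N_G fin] N_G] c(1) unfolding m_def
    by (intro power_increasing) auto
  then have "A * c ^ card (fst G - closed_nbhd G s) \<le> A * c ^ (m - d)"
    by (rule mult_left_mono[OF _ A])
  moreover have "card (fst G - {s}) = m - 1" using s(1) fin unfolding m_def by simp
  then have "real (btilde K (del_vertices G {s})) \<le> A * c ^ (m - 1)" using del_s by simp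
  moreover have "real (btilde K G) \<le>
      real (btilde K (del_vertices G {s})) + real (btilde K (del_vertices G (closed_nbhd G s)))"
    using btilde_le_del_vertex[OF G s(1), of K] by (simp only: of_nat_add[symmetric] of_nat_le_iff)
  ultimately have "real (btilde K G) \<le> A * c ^ (m - 1) + A * c ^ (m - d)"
    using del_s del_N by linarith
  also have "\<dots> \<le> A * c ^ m"
    using mult_left_mono[OF power_recurrence_le[OF c d_m] A] by (simp add: algebra_simps)
  finally show ?thesis unfolding m_def .
qed

lemma btilde_le_near_induced_copy:
  assumes G: "simple_graph G" "fst G \<subseteq> {..<N}" "\<not> has_induced_copy (disj_union H\<^sub>1 H\<^sub>2) G"
    and f: "induced_embedding f H\<^sub>1 G" and H\<^sub>1: "finite (fst H\<^sub>1)"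
  shows "btilde K G \<le> 2 ^ card (\<Union>x\<in>fst H\<^sub>1. closed_nbhd G (f x)) * bbar K H\<^sub>2 N"
proof (rule btilde_le_branching[OF _ G(1)])
  have "f x \<in> fst G" if "x \<in> fst H\<^sub>1" for x using f that unfolding induced_embedding_def by auto
  then have "(\<Union>x\<in>fst H\<^sub>1. closed_nbhd G (f x)) \<subseteq> fst G" using closed_nbhd_subset[OF G(1)] by blast
  then show "finite (\<Union>x\<in>fst H\<^sub>1. closed_nbhd G (f x))"
    using G(1) unfolding simple_graph_def by (auto intro: finite_subset)
  fix X assume X: "(\<Union>x\<in>fst H\<^sub>1. closed_nbhd G (f x)) \<subseteq> X"
  have no_copy: "\<not> has_induced_copy H\<^sub>2 (del_vertices G X)"
    using induced_embedding_disj_union[OF G(1) f _ X] G(3) unfolding has_induced_copy_iff by blast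
  show "btilde K (del_vertices G X) \<le> bbar K H\<^sub>2 N"
    using btilde_le_bbar[OF simple_graph_del_vertices[OF G(1)] _ no_copy] G(2) by auto
qed

lemma btilde_le_exponential_step:
  fixes H\<^sub>1 :: "'a graph" and H\<^sub>2 :: "'b graph" and c :: real
    and K :: "'k::field itself" and N d :: nat
  defines "A \<equiv> 2 ^ (card (fst H\<^sub>1) * d) * real (max (bbar K H\<^sub>1 N) (bbar K H\<^sub>2 N))"
  assumes H\<^sub>1: "simple_graph H\<^sub>1" and c: "c \<ge> 1" "c \<le> c ^ d * (c - 1)"
    and G: "simple_graph G" "fst G \<subseteq> {..<N}" "\<not> has_induced_copy (disj_union H\<^sub>1 H\<^sub>2) G"
    and smaller: "\<And>X. X \<subseteq> fst G \<Longrightarrow> X \<noteq> {} \<Longrightarrow>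
      real (btilde K (del_vertices G X)) \<le> A * c ^ card (fst G - X)"
  shows "real (btilde K G) \<le> A * c ^ card (fst G)"
proof -
  have A: "0 \<le> A" unfolding A_def by simp
  have A_le: "A \<le> A * c ^ card (fst G)" using mult_left_mono[OF one_le_power[OF c(1)] A] by simp
  have "real (max (bbar K H\<^sub>1 N) (bbar K H\<^sub>2 N)) \<le> A"
    using mult_right_mono[of 1 "2 ^ (card (fst H\<^sub>1) * d)" "real (max (bbar K H\<^sub>1 N) (bbar K H\<^sub>2 N))"]
    unfolding A_def by simp
  then have le_A: "real (bbar K H\<^sub>1 N) \<le> A" by simp
  show ?thesis
  proof (cases "has_induced_copy H\<^sub>1 G")
    case False
    then show ?thesis using btilde_le_bbar[OF G(1,2) False, of K] le_A A_le by linarith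
  next
    case True
    then obtain f where f: "induced_embedding f H\<^sub>1 G" unfolding has_induced_copy_iff by blast
    have fin_H\<^sub>1: "finite (fst H\<^sub>1)" using H\<^sub>1 unfolding simple_graph_def by auto
    define T where "T = (\<Union>x\<in>fst H\<^sub>1. closed_nbhd G (f x))"
    show ?thesis
    proof (cases "card T \<le> card (fst H\<^sub>1) * d")
      case True
      have "btilde K G \<le> 2 ^ card T * bbar K H\<^sub>2 N"
        unfolding T_def by (rule btilde_le_near_induced_copy[OF G f fin_H\<^sub>1])
      also have "\<dots> \<le> 2 ^ (card (fst H\<^sub>1) * d) * bbar K H\<^sub>2 N"
        using True by (intro mult_right_mono power_increasing) auto
      finally have "real (btilde K G) \<le> 2 ^ (card (fst H\<^sub>1) * d) * real (bbar K H\<^sub>2 N)"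
        by (metis of_nat_le_iff of_nat_mult of_nat_numeral of_nat_power)
      also have "\<dots> \<le> A" unfolding A_def by (simp add: mult_left_mono)
      finally show ?thesis using A_le by linarith
    next
      case False
      then have "card (fst H\<^sub>1) * d < card (\<Union>x\<in>fst H\<^sub>1. closed_nbhd G (f x))"
        unfolding T_def by simp
      then obtain x where x: "x \<in> fst H\<^sub>1" "d < card (closed_nbhd G (f x))"
        using card_UN_gt_imp_card_gt[OF fin_H\<^sub>1] by blast
      have s: "f x \<in> fst G" using f x(1) unfolding induced_embedding_def by auto
      have "closed_nbhd G (f x) \<subseteq> fst G" "closed_nbhd G (f x) \<noteq> {}"
        using closed_nbhd_subset[OF G(1) s] by (auto simp: closed_nbhd_def)
      then show ?thesis
        using btilde_le_branch_large_nbhd[OF G(1) s x(2) c A, where K = K] s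
          smaller[of "{f x}"] smaller[of "closed_nbhd G (f x)"] by simp
    qed
  qed
qed

lemma btilde_le_exponential:
  fixes H\<^sub>1 :: "'a graph" and H\<^sub>2 :: "'b graph" and c :: real
  assumes H\<^sub>1: "simple_graph H\<^sub>1" and c: "c \<ge> 1" "c \<le> c ^ d * (c - 1)"
    and G: "simple_graph G" "fst G \<subseteq> {..<N}" "\<not> has_induced_copy (disj_union H\<^sub>1 H\<^sub>2) G"
  shows "real (btilde K G) \<le>
    2 ^ (card (fst H\<^sub>1) * d) * real (max (bbar K H\<^sub>1 N) (bbar K H\<^sub>2 N)) * c ^ card (fst G)"
  using G
proof (induction "card (fst G)" arbitrary: G rule: less_induct)
  case less
  have fin: "finite (fst G)" using less.prems(1) unfolding simple_graph_def by auto
  show ?case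
  proof (rule btilde_le_exponential_step[OF H\<^sub>1 c less.prems])
    fix X assume X: "X \<subseteq> fst G" "X \<noteq> {}"
    then have "card (fst G - X) < card (fst G)" using fin by (intro psubset_card_mono) auto
    moreover have "\<not> has_induced_copy (disj_union H\<^sub>1 H\<^sub>2) (del_vertices G X)"
      using less.prems(3) has_induced_copy_del_vertices by blast
    ultimately show "real (btilde K (del_vertices G X)) \<le>
        2 ^ (card (fst H\<^sub>1) * d) * real (max (bbar K H\<^sub>1 N) (bbar K H\<^sub>2 N)) * c ^ card (fst G - X)"
      using less.hyps[of "del_vertices G X"] simple_graph_del_vertices[OF less.prems(1)]
        less.prems(2) by auto
  qed
qed

section \<open>Growth constants\<close>

lemma bbar_disj_union_le:
  fixes H\<^sub>1 :: "'a graph" and H\<^sub>2 :: "'b graph" and c :: real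
  assumes H\<^sub>1: "simple_graph H\<^sub>1" and c: "c \<ge> 1" "c \<le> c ^ d * (c - 1)"
  shows "real (bbar K (disj_union H\<^sub>1 H\<^sub>2) N) \<le>
    2 ^ (card (fst H\<^sub>1) * d) * real (max (bbar K H\<^sub>1 N) (bbar K H\<^sub>2 N)) * c ^ N"
proof (rule real_bbar_le)
  fix G assume G: "simple_graph G" "fst G \<subseteq> {..<N}" "\<not> has_induced_copy (disj_union H\<^sub>1 H\<^sub>2) G"
  have "c ^ card (fst G) \<le> c ^ N"
    using card_mono[OF _ G(2)] c(1) by (intro power_increasing) auto
  then show "real (btilde K G) \<le>
      2 ^ (card (fst H\<^sub>1) * d) * real (max (bbar K H\<^sub>1 N) (bbar K H\<^sub>2 N)) * c ^ N"
    using btilde_le_exponential[OF H\<^sub>1 c G, of K] by (meson mult_left_mono order_trans zero_le_mult_iff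
        of_nat_0_le_iff zero_le_numeral zero_le_power)
qed (use c in simp)

lemma limsup_max_le:
  fixes f g :: "nat \<Rightarrow> ereal"
  shows "limsup (\<lambda>n. max (f n) (g n)) \<le> max (limsup f) (limsup g)"
  unfolding Limsup_le_iff
proof (intro allI impI)
  fix y assume y: "max (limsup f) (limsup g) < y"
  then have "eventually (\<lambda>n. f n < y) sequentially" "eventually (\<lambda>n. g n < y) sequentially"
    using Limsup_le_iff[where F = sequentially and X = f and C = "limsup f"]
      Limsup_le_iff[where F = sequentially and X = g and C = "limsup g"] by auto
  then show "eventually (\<lambda>n. max (f n) (g n) < y) sequentially"
    by (rule eventually_elim2) simp
qed

lemma Cbar_nonneg: "0 \<le> Cbar K H"
  unfolding Cbar_def by (rule le_Limsup) (simp_all add: real_root_ge_zero)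

lemma Cbar_mono:
  assumes "\<And>G :: nat graph. \<not> has_induced_copy H G \<Longrightarrow> \<not> has_induced_copy H' G"
  shows "Cbar K H \<le> Cbar K H'"
proof -
  have "real (bbar K H n) \<le> real (bbar K H' n)" for n
  proof (rule real_bbar_le)
    fix G :: "nat graph" assume G: "simple_graph G" "fst G \<subseteq> {..<n}" "\<not> has_induced_copy H G"
    show "real (btilde K G) \<le> real (bbar K H' n)"
      using btilde_le_bbar[OF G(1,2) assms[OF G(3)]] by simp
  qed simp
  then show ?thesis unfolding Cbar_def
  proof (intro Limsup_mono always_eventually allI)
    fix n show "ereal (root n (real (bbar K H n))) \<le> ereal (root n (real (bbar K H' n)))"
      using \<open>real (bbar K H n) \<le> real (bbar K H' n)\<close> by (cases "n = 0") (auto intro: real_root_le_mono)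
  qed
qed

text \<open>The constant \<open>E = 2^(|H\<^sub>1| d)\<close> of the exponential bound has \<open>n\<close>-th root eventually
  below \<open>c\<close>, whence the factor \<open>c\<^sup>2\<close>.\<close>

lemma Cbar_disj_union_le_scaled:
  fixes H\<^sub>1 :: "'a graph" and H\<^sub>2 :: "'b graph" and c :: real
  assumes H\<^sub>1: "simple_graph H\<^sub>1" and c: "c > 1"
  shows "Cbar K (disj_union H\<^sub>1 H\<^sub>2) \<le> ereal (c * c) * max (Cbar K H\<^sub>1) (Cbar K H\<^sub>2)"
proof -
  obtain d where "c / (c - 1) < c ^ d" using real_arch_pow[OF c] by blast
  then have c_d: "c \<le> c ^ d * (c - 1)" using c by (simp add: divide_less_eq)
  define E :: real where "E = 2 ^ (card (fst H\<^sub>1) * d)"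
  define r\<^sub>1 where "r\<^sub>1 n = root n (real (bbar K H\<^sub>1 n))" for n
  define r\<^sub>2 where "r\<^sub>2 n = root n (real (bbar K H\<^sub>2 n))" for n
  have "eventually (\<lambda>n. root n E < c) sequentially"
    using order_tendstoD(2)[OF LIMSEQ_root_const c] unfolding E_def by simp
  then have "eventually (\<lambda>n. ereal (root n (real (bbar K (disj_union H\<^sub>1 H\<^sub>2) n))) \<le>
      ereal (c * c) * max (ereal (r\<^sub>1 n)) (ereal (r\<^sub>2 n))) sequentially"
    using eventually_gt_at_top[of 0]
  proof eventually_elim
    case (elim n)
    have "root n (real (bbar K (disj_union H\<^sub>1 H\<^sub>2) n)) \<le>
        root n (E * real (max (bbar K H\<^sub>1 n) (bbar K H\<^sub>2 n)) * c ^ n)"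
      using bbar_disj_union_le[OF H\<^sub>1 _ c_d, where K = K and N = n and ?H\<^sub>2 = H\<^sub>2] c unfolding E_def
      by (simp add: real_root_le_iff elim(2))
    also have "\<dots> = root n E * max (r\<^sub>1 n) (r\<^sub>2 n) * c"
      using c elim(2) by (simp add: real_root_mult real_root_power_cancel r\<^sub>1_def r\<^sub>2_def
          real_root_le_iff max_def)
    also have "\<dots> \<le> c * max (r\<^sub>1 n) (r\<^sub>2 n) * c"
      using elim(1) c
      by (intro mult_right_mono) (auto simp: r\<^sub>1_def real_root_ge_zero le_max_iff_disj)
    finally have "root n (real (bbar K (disj_union H\<^sub>1 H\<^sub>2) n)) \<le> c * c * max (r\<^sub>1 n) (r\<^sub>2 n)"
      by (simp add: algebra_simps)
    then show ?case by (cases "r\<^sub>1 n \<le> r\<^sub>2 n") (simp_all add: max_def)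
  qed
  then have "Cbar K (disj_union H\<^sub>1 H\<^sub>2) \<le>
      limsup (\<lambda>n. ereal (c * c) * max (ereal (r\<^sub>1 n)) (ereal (r\<^sub>2 n)))"
    unfolding Cbar_def by (rule Limsup_mono)
  also have "\<dots> = ereal (c * c) * limsup (\<lambda>n. max (ereal (r\<^sub>1 n)) (ereal (r\<^sub>2 n)))"
    by (rule Limsup_ereal_mult_left) (use c in auto)
  also have "\<dots> \<le> ereal (c * c) * max (Cbar K H\<^sub>1) (Cbar K H\<^sub>2)"
    unfolding Cbar_def r\<^sub>1_def r\<^sub>2_def
    by (rule ereal_mult_left_mono[OF limsup_max_le]) (use c in auto)
  finally show ?thesis .
qed

lemma ereal_le_if_le_scaled:
  fixes x y :: ereal
  assumes "0 \<le> y" and "\<And>c :: real. 1 < c \<Longrightarrow> x \<le> ereal c * y"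
  shows "x \<le> y"
proof (rule ereal_le_mult_one_interval)
  show "y \<noteq> -\<infinity>" using assms(1) by auto
  fix z :: ereal assume z: "0 < z" "z < 1"
  then obtain t where t: "z = ereal t" "0 < t" "t < 1" by (cases z) auto
  have "z * x \<le> z * (ereal (1 / t) * y)"
    using assms(2)[of "1 / t"] z t by (intro ereal_mult_left_mono) auto
  also have "\<dots> = y" using t by (simp add: mult.assoc[symmetric])
  finally show "z * x \<le> y" .
qed

theorem proposition5p2:
  fixes H1 :: "'a graph" and H2 :: "'b graph"
  assumes "simple_graph H1" and "simple_graph H2"
  shows "Cbar TYPE('k::field) (disj_union H1 H2) = max (Cbar TYPE('k) H1) (Cbar TYPE('k) H2)"
proof (rule antisym)
  show "Cbar TYPE('k) (disj_union H1 H2) \<le> max (Cbar TYPE('k) H1) (Cbar TYPE('k) H2)"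
  proof (rule ereal_le_if_le_scaled)
    show "0 \<le> max (Cbar TYPE('k) H1) (Cbar TYPE('k) H2)" by (simp add: Cbar_nonneg le_max_iff_disj)
    fix c :: real assume "1 < c"
    then show "Cbar TYPE('k) (disj_union H1 H2) \<le> ereal c * max (Cbar TYPE('k) H1) (Cbar TYPE('k) H2)"
      using Cbar_disj_union_le_scaled[OF assms(1), of "sqrt c"] by simp
  qed
  have "has_induced_copy H1 (disj_union H1 H2)" "has_induced_copy H2 (disj_union H1 H2)"
    using induced_embedding_Inl induced_embedding_Inr unfolding has_induced_copy_iff by blast+
  then show "max (Cbar TYPE('k) H1) (Cbar TYPE('k) H2) \<le> Cbar TYPE('k) (disj_union H1 H2)"
    by (intro max.boundedI Cbar_mono) (use has_induced_copy_trans in blast)+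
qed

end
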